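(* Let $\lambda \geq 1$, $\mu \geq 0$, $\delta \geq 0$, $t\in\left(\tfrac12,1\right)$ and $\xi=\frac{2\lambda+\mu}{2\lambda+1}$. Let $f(z)=z+\sum_{n=2}^{\infty}a_n z^n$ belong to the class $\mathscr{B}_{\Sigma}^{\mu}(\lambda,\delta,t)$ defined below. Then \[ |a_{2}|\leq \frac{2t\sqrt{2t}}{\sqrt{\left|(\lambda+\mu+2\xi\delta)^{2}-2\left[2(\lambda+\mu +2\xi\delta)^{2}- (2\lambda + \mu)(\mu+1)-12 \xi\delta\right]t^{2}\right|}} \] and \[ |a_{3}|\leq \frac{4t^{2}}{(\lambda + \mu +2\xi\delta )^{2}}+\frac{2t}{2\lambda+\mu +6\xi\delta}. \]
   Context: Let $\mathbb{U}=\{z\in\mathbb{C}:|z|<1\}$ and let $\mathcal{A}$ be the class of analytic functions $f$ on $\mathbb{U}$ with $f(0)=0$, $f'(0)=1$, i.e. $f(z)=z+\sum_{n\ge2}a_nz^n$. A function $f\in\mathcal{A}$ is bi-univalent if $f$ is univalent on $\mathbb{U}$ and its inverse $g=f^{-1}$ (defined near $0$, with $f^{-1}(f(z))=z$, and $g(w)=w-a_2w^2+(2a_2^2-a_3)w^3-\cdots$) extends to a univalent function on $\mathbb{U}$; $\Sigma$ denotes the class of such $f$. For analytic $F,G$ on $\mathbb{U}$, $F\prec G$ (subordination) means there is an analytic $\omega$ on $\mathbb{U}$ with $\omega(0)=0$, $|\omega(z)|<1$ and $F=G\circ\omega$. The Chebyshev polynomials of the second kind are $U_0(t)=1$, $U_1(t)=2t$,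 $U_{n+1}(t)=2tU_n(t)-U_{n-1}(t)$, with generating function $H(z,t)=\frac{1}{1-2tz+z^2}=\sum_{n\ge0}U_n(t)z^n$. For $\lambda\ge1,\mu\ge0,\delta\ge0$, $t\in(\frac12,1)$ and $\xi=\frac{2\lambda+\mu}{2\lambda+1}$, the class $\mathscr{B}_{\Sigma}^{\mu}(\lambda,\delta,t)$ consists of all $f\in\Sigma$ such that, with $g=f^{-1}$, \[ (1-\lambda)\left(\tfrac{f(z)}{z}\right)^{\mu}+\lambda f'(z)\left(\tfrac{f(z)}{z}\right)^{\mu-1}+\xi\delta z f''(z)\prec H(z,t) \] and \[ (1-\lambda)\left(\tfrac{g(w)}{w}\right)^{\mu}+\lambda g'(w)\left(\tfrac{g(w)}{w}\right)^{\mu-1}+\xi\delta w g''(w)\prec H(w,t), \] where powers are taken with the principal branch equal to $1$ at the origin. *)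

theory Defs
  imports "HOL-Analysis.Analysis"
begin

abbreviation unit_disc :: "complex set" where
  "unit_disc \<equiv> ball 0 1"

definition normalized_analytic :: "(complex \<Rightarrow> complex) \<Rightarrow> bool" where
  "normalized_analytic f \<longleftrightarrow> f holomorphic_on unit_disc \<and> f 0 = 0 \<and> deriv f 0 = 1"

text \<open>Bi-univalent class Sigma: f in A univalent on the disc, and the local inverse
  of f at 0 extends to a univalent analytic function g on the disc.  "g extends
  the inverse" is expressed by: g equals the inverse of f on a neighbourhood of 0.\<close>
definition bi_univalent :: "(complex \<Rightarrow> complex) \<Rightarrow> bool" where
  "bi_univalent f \<longleftrightarrow> normalized_analytic f \<and> inj_on f unit_disc \<and>
     (\<exists>g. g holomorphic_on unit_disc \<and> inj_on g unit_disc \<and>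
          (\<exists>r>0. \<forall>w\<in>ball 0 r. g w \<in> unit_disc \<and> f (g w) = w))"

text \<open>The (unique) analytic continuation of the inverse, used to name g = f^{-1}.\<close>
definition is_bi_inverse :: "(complex \<Rightarrow> complex) \<Rightarrow> (complex \<Rightarrow> complex) \<Rightarrow> bool" where
  "is_bi_inverse f g \<longleftrightarrow> g holomorphic_on unit_disc \<and> inj_on g unit_disc \<and>
          (\<exists>r>0. \<forall>w\<in>ball 0 r. g w \<in> unit_disc \<and> f (g w) = w)"

definition subordinate :: "(complex \<Rightarrow> complex) \<Rightarrow> (complex \<Rightarrow> complex) \<Rightarrow> bool" where
  "subordinate F G \<longleftrightarrow>
     (\<exists>\<omega>. \<omega> holomorphic_on unit_disc \<and> \<omega> 0 = 0 \<and>
          (\<forall>z\<in>unit_disc. norm (\<omega> z) < 1) \<and>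
          (\<forall>z\<in>unit_disc. F z = G (\<omega> z)))"

text \<open>Generating function of Chebyshev polynomials of the second kind.\<close>
definition cheb_H :: "real \<Rightarrow> complex \<Rightarrow> complex" where
  "cheb_H t z = 1 / (1 - 2 * complex_of_real t * z + z ^ 2)"

definition quot0 :: "(complex \<Rightarrow> complex) \<Rightarrow> complex \<Rightarrow> complex" where
  "quot0 f z = (if z = 0 then deriv f 0 else f z / z)"

text \<open>The operator
  (1-\<lambda>)(f(z)/z)^\<mu> + \<lambda> f'(z) (f(z)/z)^(\<mu>-1) + \<xi>\<delta> z f''(z),
  where the powers are exp(\<mu> L z), exp((\<mu>-1) L z) for the branch L of log(f(z)/z)
  that is analytic on the disc with L(0) = 0.\<close>
definition B_operator :: "real \<Rightarrow> real \<Rightarrow> real \<Rightarrow> (complex \<Rightarrow> complex) \<Rightarrow>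
    (complex \<Rightarrow> complex) \<Rightarrow> complex \<Rightarrow> complex" where
  "B_operator lam \<mu> \<delta> f L z =
     (1 - complex_of_real lam) * exp (complex_of_real \<mu> * L z)
     + complex_of_real lam * deriv f z * exp (complex_of_real (\<mu> - 1) * L z)
     + complex_of_real ((2*lam + \<mu>) / (2*lam + 1) * \<delta>) * z * deriv (deriv f) z"

text \<open>The subordination condition for a function h \<in> {f, g}: with L the analytic
  logarithm of h(z)/z normalized by L(0) = 0 (it exists and is unique).\<close>
definition B_condition :: "real \<Rightarrow> real \<Rightarrow> real \<Rightarrow> real \<Rightarrow> (complex \<Rightarrow> complex) \<Rightarrow> bool" where
  "B_condition lam \<mu> \<delta> t h \<longleftrightarrow>
     (\<exists>L. L holomorphic_on unit_disc \<and> L 0 = 0 \<and>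
          (\<forall>z\<in>unit_disc. exp (L z) = quot0 h z) \<and>
          subordinate (B_operator lam \<mu> \<delta> h L) (cheb_H t))"

definition B_class :: "real \<Rightarrow> real \<Rightarrow> real \<Rightarrow> real \<Rightarrow> (complex \<Rightarrow> complex) set" where
  "B_class \<mu> lam \<delta> t =
     {f. bi_univalent f \<and> B_condition lam \<mu> \<delta> t f \<and>
         (\<forall>g. is_bi_inverse f g \<longrightarrow> B_condition lam \<mu> \<delta> t g)}"

definition taylor_coeff :: "(complex \<Rightarrow> complex) \<Rightarrow> nat \<Rightarrow> complex" where
  "taylor_coeff f n = (deriv ^^ n) f 0 / of_nat (fact n)"

end

theory Submission
  imports Defs "HOL-Complex_Analysis.Complex_Analysis"
begin

(* For h = f and for h = g = f^-1 the subordination provides a Schwarz function w with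
   B_operator h = H(t, w(z)).  Writing h(z) = z exp(L z) and comparing the first two derivatives
   at 0 gives, with c1 = w'(0) and c2 = w''(0)/2 (both of modulus at most 1 by the Cauchy
   estimates),
     (lam + mu + 2 xi delta) a2 = 2t c1,
     (2 lam + mu + 6 xi delta) a3 + (2 lam + mu)(mu - 1)/2 a2^2 = 2t c2 + (4t^2 - 1) c1^2,
   and the same relations for g, whose coefficients are -a2 and 2 a2^2 - a3.  The first-order
   relations force d1 = -c1; the sum of the two second-order relations then no longer involves
   a3 and bounds |a2|, while their difference expresses a3 - a2^2 through c2 - d2. *)

lemma norm_higher_deriv_le_fact_unit_disc:
  assumes "f holomorphic_on unit_disc" and "\<And>z. z \<in> unit_disc \<Longrightarrow> norm (f z) \<le> 1"
  shows "norm ((deriv ^^ n) f 0) \<le> fact n"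
proof -
  have Cauchy: "norm ((deriv ^^ n) f 0) * r ^ n \<le> fact n" if r: "0 < r" "r < 1" for r
  proof -
    have "norm ((deriv ^^ n) f 0) \<le> fact n * 1 / r ^ n"
    proof (rule Cauchy_inequality)
      show "f holomorphic_on ball 0 r"
        using assms(1) r by (auto elim: holomorphic_on_subset)
      have "cball 0 r \<subseteq> unit_disc" using r by auto
      then show "continuous_on (cball 0 r) f"
        using holomorphic_on_imp_continuous_on[OF assms(1)] by (rule continuous_on_subset[rotated])
    qed (use assms(2) r in auto)
    with r show ?thesis by (simp add: field_simps)
  qed
  have "((\<lambda>r. norm ((deriv ^^ n) f 0) * r ^ n) \<longlongrightarrow> norm ((deriv ^^ n) f 0)) (at_left 1)"
    by (auto intro!: tendsto_eq_intros)
  moreover have "eventually (\<lambda>r. r \<in> {0<..<1}) (at_left (1::real))"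
    by (rule eventually_at_left_real) simp
  then have "eventually (\<lambda>r. norm ((deriv ^^ n) f 0) * r ^ n \<le> fact n) (at_left (1::real))"
    by eventually_elim (auto intro: Cauchy)
  ultimately show ?thesis
    by (rule tendsto_upperbound) simp
qed

lemma higher_deriv_ident_mult:
  assumes "q holomorphic_on S" "open S" "z \<in> S"
  shows "(deriv ^^ Suc n) (\<lambda>w. w * q w) z = z * (deriv ^^ Suc n) q z + of_nat (Suc n) * (deriv ^^ n) q z"
proof -
  have "(deriv ^^ Suc n) (\<lambda>w. w * q w) z =
      (\<Sum>i = 0..Suc n. of_nat (Suc n choose i) * (deriv ^^ i) (\<lambda>w. w) z * (deriv ^^ (Suc n - i)) q z)"
    using assms by (intro higher_deriv_mult) auto
  also have "\<dots> = (\<Sum>i\<in>{0, 1}. of_nat (Suc n choose i) * (deriv ^^ i) (\<lambda>w. w) z * (deriv ^^ (Suc n - i)) q z)"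
    by (rule sum.mono_neutral_right) auto
  finally show ?thesis by simp
qed

lemma higher_deriv2_mult:
  fixes u v :: "complex \<Rightarrow> complex"
  assumes "u holomorphic_on S" "v holomorphic_on S" "open S" "z \<in> S"
  shows "(deriv ^^ 2) (\<lambda>w. u w * v w) z =
    (deriv ^^ 2) u z * v z + 2 * deriv u z * deriv v z + u z * (deriv ^^ 2) v z"
  using higher_deriv_mult[OF assms, of 2] by (simp add: eval_nat_numeral)

lemma deriv_compose_open:
  fixes f g :: "complex \<Rightarrow> complex"
  assumes "f holomorphic_on T" "g holomorphic_on S" "open S" "open T" "g ` S \<subseteq> T" "z \<in> S"
  shows "deriv (\<lambda>x. f (g x)) z = deriv f (g z) * deriv g z"
  using assms by (intro deriv_compose_analytic holomorphic_on_imp_analytic_at[of _ T]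
      holomorphic_on_imp_analytic_at[of _ S]) auto

lemma higher_deriv_compose_Suc:
  fixes f g :: "complex \<Rightarrow> complex"
  assumes f: "f holomorphic_on T" and g: "g holomorphic_on S"
    and S: "open S" and T: "open T" and gST: "g ` S \<subseteq> T" and z: "z \<in> S"
  shows "(deriv ^^ Suc n) (\<lambda>x. f (g x)) z = (deriv ^^ n) (\<lambda>x. deriv f (g x) * deriv g x) z"
proof -
  have "(\<lambda>x. f (g x)) holomorphic_on S"
    using holomorphic_on_compose_gen[OF g f gST] by (simp add: o_def)
  moreover have "(\<lambda>x. deriv f (g x)) holomorphic_on S"
    using holomorphic_deriv_compose[OF f g gST T] .
  ultimately have "(deriv ^^ n) (deriv (\<lambda>x. f (g x))) z = (deriv ^^ n) (\<lambda>x. deriv f (g x) * deriv g x) z"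
    using assms by (intro higher_deriv_transform_within_open[of _ S] deriv_compose_open[of _ T]
        holomorphic_on_mult holomorphic_deriv) auto
  then show ?thesis
    by (simp only: funpow_Suc_right o_apply)
qed

lemma higher_deriv2_compose:
  fixes f g :: "complex \<Rightarrow> complex"
  assumes f: "f holomorphic_on T" and g: "g holomorphic_on S"
    and S: "open S" and T: "open T" and gST: "g ` S \<subseteq> T" and z: "z \<in> S"
  shows "(deriv ^^ 2) (\<lambda>x. f (g x)) z =
    (deriv ^^ 2) f (g z) * deriv g z ^ 2 + deriv f (g z) * (deriv ^^ 2) g z"
proof -
  have "(\<lambda>x. deriv f (g x)) holomorphic_on S" "deriv g holomorphic_on S"
    using holomorphic_deriv_compose[OF f g gST T] holomorphic_deriv[OF g S] .
  then have "deriv (\<lambda>x. deriv f (g x) * deriv g x) z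
      = deriv (\<lambda>x. deriv f (g x)) z * deriv g z + deriv f (g z) * deriv (deriv g) z"
    using S z by (subst deriv_mult) (auto intro: holomorphic_on_imp_differentiable_at)
  moreover have "deriv (\<lambda>x. deriv f (g x)) z = deriv (deriv f) (g z) * deriv g z"
    using assms by (intro deriv_compose_open[of _ T] holomorphic_deriv)
  ultimately show ?thesis
    using higher_deriv_compose_Suc[OF assms, of 1]
    by (simp add: numeral_2_eq_2 power2_eq_square)
qed

lemma higher_deriv3_compose:
  fixes f g :: "complex \<Rightarrow> complex"
  assumes f: "f holomorphic_on T" and g: "g holomorphic_on S"
    and S: "open S" and T: "open T" and gST: "g ` S \<subseteq> T" and z: "z \<in> S"
  shows "(deriv ^^ 3) (\<lambda>x. f (g x)) z = (deriv ^^ 3) f (g z) * deriv g z ^ 3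
    + 3 * (deriv ^^ 2) f (g z) * deriv g z * (deriv ^^ 2) g z + deriv f (g z) * (deriv ^^ 3) g z"
proof -
  have f': "deriv f holomorphic_on T" and f'g: "(\<lambda>x. deriv f (g x)) holomorphic_on S"
    using holomorphic_deriv[OF f T] holomorphic_deriv_compose[OF f g gST T] .
  have "(deriv ^^ 3) (\<lambda>x. f (g x)) z = (deriv ^^ 2) (\<lambda>x. deriv f (g x) * deriv g x) z"
    using higher_deriv_compose_Suc[OF assms, of 2] by (simp add: numeral_3_eq_3 numeral_2_eq_2)
  also have "\<dots> = (deriv ^^ 2) (\<lambda>x. deriv f (g x)) z * deriv g z
      + 2 * deriv (\<lambda>x. deriv f (g x)) z * (deriv ^^ 2) g z + deriv f (g z) * (deriv ^^ 3) g z"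
    using higher_deriv2_mult[OF f'g holomorphic_deriv[OF g S] S z]
    by (simp add: eval_nat_numeral funpow_Suc_right)
  finally have "(deriv ^^ 3) (\<lambda>x. f (g x)) z = \<dots>" .
  moreover have "(deriv ^^ 2) (\<lambda>x. deriv f (g x)) z =
      (deriv ^^ 3) f (g z) * deriv g z ^ 2 + (deriv ^^ 2) f (g z) * (deriv ^^ 2) g z"
    using higher_deriv2_compose[OF f' g S T gST z]
    by (simp add: numeral_3_eq_3 numeral_2_eq_2)
  moreover have "deriv (\<lambda>x. deriv f (g x)) z = (deriv ^^ 2) f (g z) * deriv g z"
    using deriv_compose_open[OF f' g S T gST z] by (simp add: numeral_2_eq_2)
  ultimately show ?thesis
    by (simp add: power2_eq_square power3_eq_cube algebra_simps)
qed

lemma higher_derivs_inverse_at_0: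
  fixes f g :: "complex \<Rightarrow> complex"
  assumes f: "f holomorphic_on T" and g: "g holomorphic_on S"
    and S: "open S" and T: "open T" and gST: "g ` S \<subseteq> T" and "0 \<in> S"
    and inverse: "\<And>w. w \<in> S \<Longrightarrow> f (g w) = w" and "g 0 = 0" and "deriv f 0 = 1"
  shows "deriv g 0 = 1" "(deriv ^^ 2) g 0 = - (deriv ^^ 2) f 0"
    "(deriv ^^ 3) g 0 = 3 * ((deriv ^^ 2) f 0) ^ 2 - (deriv ^^ 3) f 0"
proof -
  have fg: "(\<lambda>w. f (g w)) holomorphic_on S"
    using holomorphic_on_compose_gen[OF g f gST] by (simp add: o_def)
  have id: "(deriv ^^ n) (\<lambda>w. f (g w)) 0 = (deriv ^^ n) (\<lambda>w. w) 0" for n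
    using fg S \<open>0 \<in> S\<close> inverse by (intro higher_deriv_transform_within_open) auto
  note chain = deriv_compose_open higher_deriv2_compose higher_deriv3_compose
  show g1: "deriv g 0 = 1"
    using id[of 1] chain(1)[OF assms(1-6)] assms by simp
  show g2: "(deriv ^^ 2) g 0 = - (deriv ^^ 2) f 0"
    using id[of 2] chain(2)[OF assms(1-6)] assms g1 by (simp add: add_eq_0_iff)
  show "(deriv ^^ 3) g 0 = 3 * ((deriv ^^ 2) f 0) ^ 2 - (deriv ^^ 3) f 0"
  proof -
    have "(deriv ^^ 3) f 0 + 3 * (deriv ^^ 2) f 0 * (deriv ^^ 2) g 0 + (deriv ^^ 3) g 0 = 0"
      using id[of 3] chain(3)[OF assms(1-6)] assms g1 by simp
    with g2 show ?thesis by algebra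
  qed
qed

lemma deriv_exp_complex [simp]: "deriv exp = (exp :: complex \<Rightarrow> complex)"
  by (intro ext DERIV_imp_deriv DERIV_exp)

lemma derivs_exp_scaled_at_0:
  fixes L :: "complex \<Rightarrow> complex"
  assumes L: "L holomorphic_on S" and S: "open S" "0 \<in> S" and "L 0 = 0"
  shows "deriv (\<lambda>z. exp (c * L z)) 0 = c * deriv L 0"
    "(deriv ^^ 2) (\<lambda>z. exp (c * L z)) 0 = c * (deriv ^^ 2) L 0 + (c * deriv L 0) ^ 2"
proof -
  have cL: "(\<lambda>z. c * L z) holomorphic_on S"
    using L by (intro holomorphic_intros)
  have "(deriv ^^ n) (\<lambda>z. c * L z) 0 = c * (deriv ^^ n) L 0" for n
    by (rule higher_deriv_cmult[OF L S(2,1)])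
  note cL_derivs = this[of 1] this[of 2]
  show "deriv (\<lambda>z. exp (c * L z)) 0 = c * deriv L 0"
    using deriv_compose_open[OF holomorphic_on_exp cL S(1) open_UNIV] S cL_derivs \<open>L 0 = 0\<close> by simp
  show "(deriv ^^ 2) (\<lambda>z. exp (c * L z)) 0 = c * (deriv ^^ 2) L 0 + (c * deriv L 0) ^ 2"
    using higher_deriv2_compose[OF holomorphic_on_exp cL S(1) open_UNIV] S cL_derivs \<open>L 0 = 0\<close>
    by (simp add: numeral_2_eq_2)
qed

lemma higher_derivs_ident_mult_exp_at_0:
  assumes h: "h holomorphic_on S" and L: "L holomorphic_on S" and S: "open S" "0 \<in> S"
    and "L 0 = 0" and h_eq: "\<And>z. z \<in> S \<Longrightarrow> h z = z * exp (L z)"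
  shows "(deriv ^^ 2) h 0 = 2 * deriv L 0"
    "(deriv ^^ 3) h 0 = 3 * ((deriv ^^ 2) L 0 + deriv L 0 ^ 2)"
proof -
  have expL: "(\<lambda>z. exp (L z)) holomorphic_on S"
    using L by (intro holomorphic_intros)
  have "(deriv ^^ Suc n) h 0 = of_nat (Suc n) * (deriv ^^ n) (\<lambda>z. exp (L z)) 0" for n
  proof -
    have "(deriv ^^ Suc n) h 0 = (deriv ^^ Suc n) (\<lambda>z. z * exp (L z)) 0"
      using h expL S h_eq by (intro higher_deriv_transform_within_open) (auto intro: holomorphic_intros)
    also have "\<dots> = of_nat (Suc n) * (deriv ^^ n) (\<lambda>z. exp (L z)) 0"
      using higher_deriv_ident_mult[OF expL S] by simp
    finally show ?thesis .
  qed
  from this[of 1] this[of 2] show "(deriv ^^ 2) h 0 = 2 * deriv L 0"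
    "(deriv ^^ 3) h 0 = 3 * ((deriv ^^ 2) L 0 + deriv L 0 ^ 2)"
    using derivs_exp_scaled_at_0[OF L S \<open>L 0 = 0\<close>, of 1]
    by (simp_all add: numeral_2_eq_2 numeral_3_eq_3)
qed

(* The zeros t +- i sqrt(1 - t^2) of the denominator lie on the unit circle. *)
lemma cheb_denominator_nonzero:
  assumes "\<bar>t\<bar> \<le> 1" and "norm w < 1"
  shows "1 - 2 * complex_of_real t * w + w ^ 2 \<noteq> 0"
proof
  assume eq: "1 - 2 * complex_of_real t * w + w ^ 2 = 0"
  obtain x y where w: "w = Complex x y" by (cases w)
  have re: "1 - 2*t*x + x^2 - y^2 = 0" and im: "- 2*t*y + 2*x*y = 0"
    using eq unfolding w by (auto simp: complex_eq_iff power2_eq_square)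
  have norm: "x^2 + y^2 < 1"
    using assms(2) unfolding w by (simp add: cmod_def)
  from im have "y = 0 \<or> x = t" by (auto simp: algebra_simps)
  then show False
  proof
    assume "y = 0"
    then have "(x - t)^2 + (1 - t^2) = 0" using re by (simp add: power2_eq_square algebra_simps)
    moreover have "t^2 \<le> 1" using assms(1) by (simp add: abs_square_le_1)
    ultimately have "(x - t)^2 = 0" "1 - t^2 = 0"
      using add_nonneg_eq_0_iff[of "(x - t)^2" "1 - t^2"] by simp_all
    then have "x^2 = 1" by simp
    with norm show False by simp
  next
    assume "x = t"
    with re norm show False by (simp add: power2_eq_square algebra_simps)
  qed
qed

lemma holomorphic_cheb_H:
  assumes "\<bar>t\<bar> \<le> 1"
  shows "cheb_H t holomorphic_on unit_disc"
  unfolding cheb_H_def using cheb_denominator_nonzero[OF assms]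
  by (auto intro!: holomorphic_intros)

lemma has_field_derivative_cheb_H:
  assumes "1 - 2 * complex_of_real t * w + w^2 \<noteq> 0"
  shows "(cheb_H t has_field_derivative (2 * complex_of_real t - 2 * w) * cheb_H t w ^ 2) (at w)"
  unfolding cheb_H_def using assms
  by (auto intro!: derivative_eq_intros simp: field_simps power2_eq_square)

lemma cheb_H_derivs_at_0:
  assumes "\<bar>t\<bar> \<le> 1"
  shows "cheb_H t 0 = 1" "deriv (cheb_H t) 0 = 2 * complex_of_real t"
    "(deriv ^^ 2) (cheb_H t) 0 = 8 * complex_of_real t ^ 2 - 2"
proof -
  show H0: "cheb_H t 0 = 1" by (simp add: cheb_H_def)
  have dH: "deriv (cheb_H t) w = (2 * complex_of_real t - 2 * w) * cheb_H t w ^ 2"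
    if "w \<in> unit_disc" for w
    using that cheb_denominator_nonzero[OF assms]
    by (intro DERIV_imp_deriv has_field_derivative_cheb_H) auto
  then show "deriv (cheb_H t) 0 = 2 * complex_of_real t" by (simp add: H0)
  have "eventually (\<lambda>w. deriv (cheb_H t) w = (2 * complex_of_real t - 2 * w) * cheb_H t w ^ 2) (nhds 0)"
    using eventually_nhds_in_open[of unit_disc 0] by (simp add: dH eventually_mono)
  then have "deriv (deriv (cheb_H t)) 0 = deriv (\<lambda>w. (2 * complex_of_real t - 2 * w) * cheb_H t w ^ 2) 0"
    by (rule deriv_cong_ev) simp
  also have "\<dots> = 8 * complex_of_real t ^ 2 - 2"
    using has_field_derivative_cheb_H[of t 0]
    by (intro DERIV_imp_deriv) (auto intro!: derivative_eq_intros simp: H0 algebra_simps power2_eq_square)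
  finally show "(deriv ^^ 2) (cheb_H t) 0 = 8 * complex_of_real t ^ 2 - 2"
    by (simp add: numeral_2_eq_2)
qed

lemma B_operator_eq:
  fixes h L :: "complex \<Rightarrow> complex"
  assumes h: "h holomorphic_on S" and L: "L holomorphic_on S" and S: "open S"
    and h_eq: "\<And>z. z \<in> S \<Longrightarrow> h z = z * exp (L z)" and z: "z \<in> S"
  shows "B_operator lam \<mu> \<delta> h L z =
    exp (of_real \<mu> * L z) * (1 + of_real lam * (z * deriv L z))
    + of_real ((2*lam + \<mu>) / (2*lam + 1) * \<delta>) * (z * (deriv ^^ 2) h z)"
proof -
  have "deriv h z = deriv (\<lambda>z. z * exp (L z)) z"
    using higher_deriv_transform_within_open[OF h _ S z h_eq, of 1] L by (simp add: holomorphic_intros)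
  also have "\<dots> = exp (L z) * (1 + z * deriv L z)"
    using holomorphic_derivI[OF L S z]
    by (intro DERIV_imp_deriv) (auto intro!: derivative_eq_intros simp: algebra_simps)
  finally have "deriv h z * exp (of_real (\<mu> - 1) * L z) = exp (of_real \<mu> * L z) * (1 + z * deriv L z)"
    by (simp add: mult_ac exp_add[symmetric] algebra_simps)
  then show ?thesis
    unfolding B_operator_def by (simp add: numeral_2_eq_2 algebra_simps)
qed

lemma higher_deriv_B_operator:
  fixes h L :: "complex \<Rightarrow> complex" and lam \<mu> \<delta> :: real
  assumes h: "h holomorphic_on S" and L: "L holomorphic_on S" and S: "open S" "z \<in> S"
    and h_eq: "\<And>z. z \<in> S \<Longrightarrow> h z = z * exp (L z)"
  defines "\<kappa> \<equiv> (2*lam + \<mu>) / (2*lam + 1) * \<delta>"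
  shows "(deriv ^^ n) (B_operator lam \<mu> \<delta> h L) z =
    (deriv ^^ n) (\<lambda>z. exp (of_real \<mu> * L z) * (1 + of_real lam * (z * deriv L z))) z
    + of_real \<kappa> * (deriv ^^ n) (\<lambda>z. z * (deriv ^^ 2) h z) z"
proof -
  define E where "E = (\<lambda>z. exp (of_real \<mu> * L z) * (1 + of_real lam * (z * deriv L z)))"
  define Q where "Q = (\<lambda>z. z * (deriv ^^ 2) h z)"
  have hol: "E holomorphic_on S" "Q holomorphic_on S"
    unfolding E_def Q_def using h L S by (auto intro!: holomorphic_intros)
  then have G: "(\<lambda>z. E z + of_real \<kappa> * Q z) holomorphic_on S"
    by (intro holomorphic_intros)
  have eq: "E w + of_real \<kappa> * Q w = B_operator lam \<mu> \<delta> h L w" if "w \<in> S" for w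
    using B_operator_eq[OF h L S(1) h_eq that] by (simp add: E_def Q_def \<kappa>_def)
  then have "B_operator lam \<mu> \<delta> h L holomorphic_on S"
    by (rule holomorphic_transform[OF G])
  with G S eq have "(deriv ^^ n) (B_operator lam \<mu> \<delta> h L) z = (deriv ^^ n) (\<lambda>z. E z + of_real \<kappa> * Q z) z"
    by (intro higher_deriv_transform_within_open) auto
  also have "\<dots> = (deriv ^^ n) E z + (deriv ^^ n) (\<lambda>z. of_real \<kappa> * Q z) z"
    using hol S by (intro higher_deriv_add holomorphic_intros)
  also have "(deriv ^^ n) (\<lambda>z. of_real \<kappa> * Q z) z = of_real \<kappa> * (deriv ^^ n) Q z"
    using hol S by (intro higher_deriv_cmult)
  finally show ?thesis
    by (simp add: E_def Q_def)
qed

lemma B_operator_derivs_at_0: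
  fixes h L :: "complex \<Rightarrow> complex" and lam \<mu> \<delta> :: real
  assumes h: "h holomorphic_on S" and L: "L holomorphic_on S" and S: "open S" "0 \<in> S"
    and "L 0 = 0" and h_eq: "\<And>z. z \<in> S \<Longrightarrow> h z = z * exp (L z)"
  defines "\<kappa> \<equiv> (2*lam + \<mu>) / (2*lam + 1) * \<delta>"
  shows "deriv (B_operator lam \<mu> \<delta> h L) 0 = of_real (lam + \<mu> + 2*\<kappa>) * deriv L 0"
    "(deriv ^^ 2) (B_operator lam \<mu> \<delta> h L) 0 =
       of_real (2*lam + \<mu> + 6*\<kappa>) * (deriv ^^ 2) L 0
       + of_real (\<mu>^2 + 2*lam*\<mu> + 6*\<kappa>) * deriv L 0 ^ 2"
proof -
  define E where "E = (\<lambda>z. exp (of_real \<mu> * L z))"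
  define P where "P = (\<lambda>z. 1 + of_real lam * (z * deriv L z))"
  have hol: "E holomorphic_on S" "P holomorphic_on S" "deriv L holomorphic_on S"
    "(\<lambda>z. z * deriv L z) holomorphic_on S"
    unfolding E_def P_def using L S by (auto intro!: holomorphic_intros)
  note split = higher_deriv_B_operator[OF h L S h_eq, where lam=lam and \<mu>=\<mu> and \<delta>=\<delta>, folded \<kappa>_def]
  note E = derivs_exp_scaled_at_0[OF L S \<open>L 0 = 0\<close>, of "of_real \<mu>", folded E_def]
  have P: "deriv P 0 = of_real lam * deriv L 0" "(deriv ^^ 2) P 0 = 2 * of_real lam * (deriv ^^ 2) L 0"
  proof -
    have "(deriv ^^ Suc n) P 0 = of_real lam * (deriv ^^ Suc n) (\<lambda>z. z * deriv L z) 0" for n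
      unfolding P_def using hol(4) S higher_deriv_cmult[OF hol(4) S(2,1)]
      by (subst higher_deriv_add) (auto intro: holomorphic_intros simp del: funpow.simps)
    from this[of 0] this[of 1] show "deriv P 0 = of_real lam * deriv L 0"
      "(deriv ^^ 2) P 0 = 2 * of_real lam * (deriv ^^ 2) L 0"
      using higher_deriv_ident_mult[OF hol(3) S, of 0] higher_deriv_ident_mult[OF hol(3) S, of 1]
      by (simp_all add: numeral_2_eq_2 funpow_Suc_right del: funpow.simps)
  qed
  have Q: "deriv (\<lambda>z. z * (deriv ^^ 2) h z) 0 = 2 * deriv L 0"
    "(deriv ^^ 2) (\<lambda>z. z * (deriv ^^ 2) h z) 0 = 6 * ((deriv ^^ 2) L 0 + deriv L 0 ^ 2)"
    using higher_deriv_ident_mult[OF holomorphic_higher_deriv[OF h S(1), of 2] S, of 0]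
      higher_deriv_ident_mult[OF holomorphic_higher_deriv[OF h S(1), of 2] S, of 1]
      higher_derivs_ident_mult_exp_at_0[OF h L S \<open>L 0 = 0\<close> h_eq]
    by (simp_all add: numeral_2_eq_2 numeral_3_eq_3 funpow_Suc_right)
  have EP: "deriv (\<lambda>z. E z * P z) 0 = deriv E 0 * P 0 + E 0 * deriv P 0"
    using hol S by (subst deriv_mult) (auto intro: holomorphic_on_imp_differentiable_at simp: algebra_simps)
  show "deriv (B_operator lam \<mu> \<delta> h L) 0 = of_real (lam + \<mu> + 2*\<kappa>) * deriv L 0"
    using split[of 1] EP E P Q \<open>L 0 = 0\<close> by (simp add: E_def P_def algebra_simps)
  show "(deriv ^^ 2) (B_operator lam \<mu> \<delta> h L) 0 =
       of_real (2*lam + \<mu> + 6*\<kappa>) * (deriv ^^ 2) L 0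
       + of_real (\<mu>^2 + 2*lam*\<mu> + 6*\<kappa>) * deriv L 0 ^ 2"
    using split[of 2] higher_deriv2_mult[OF hol(1,2) S] E P Q \<open>L 0 = 0\<close>
    by (simp add: E_def P_def algebra_simps power2_eq_square)
qed

lemma taylor_coeff_2: "taylor_coeff f 2 = (deriv ^^ 2) f 0 / 2"
  and taylor_coeff_3: "taylor_coeff f 3 = (deriv ^^ 3) f 0 / 6"
  by (simp_all add: taylor_coeff_def fact_numeral)

lemma B_condition_coeff_relations:
  fixes lam \<mu> \<delta> t :: real and h :: "complex \<Rightarrow> complex"
  assumes h: "normalized_analytic h" and cond: "B_condition lam \<mu> \<delta> t h" and t: "\<bar>t\<bar> \<le> 1"
  defines "\<kappa> \<equiv> (2*lam + \<mu>) / (2*lam + 1) * \<delta>"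
  shows "\<exists>c1 c2. norm c1 \<le> 1 \<and> norm c2 \<le> 1 \<and>
    of_real (lam + \<mu> + 2*\<kappa>) * taylor_coeff h 2 = 2 * of_real t * c1 \<and>
    of_real (2*lam + \<mu> + 6*\<kappa>) * taylor_coeff h 3
      + of_real ((2*lam + \<mu>) * (\<mu> - 1) / 2) * taylor_coeff h 2 ^ 2
      = 2 * of_real t * c2 + (4 * of_real t ^ 2 - 1) * c1 ^ 2"
proof -
  obtain L where L: "L holomorphic_on unit_disc" and "L 0 = 0"
    and exp_L: "\<And>z. z \<in> unit_disc \<Longrightarrow> exp (L z) = quot0 h z"
    and "subordinate (B_operator lam \<mu> \<delta> h L) (cheb_H t)"
    using cond unfolding B_condition_def by blast
  then obtain \<omega> where \<omega>: "\<omega> holomorphic_on unit_disc" and "\<omega> 0 = 0"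
    and \<omega>_disc: "\<And>z. z \<in> unit_disc \<Longrightarrow> norm (\<omega> z) < 1"
    and F_eq: "\<And>z. z \<in> unit_disc \<Longrightarrow> cheb_H t (\<omega> z) = B_operator lam \<mu> \<delta> h L z"
    unfolding subordinate_def by force
  have h_hol: "h holomorphic_on unit_disc" and "h 0 = 0"
    using h unfolding normalized_analytic_def by auto
  have h_eq: "h z = z * exp (L z)" if "z \<in> unit_disc" for z
    using exp_L[OF that] \<open>h 0 = 0\<close> by (cases "z = 0") (auto simp: quot0_def)
  have \<omega>_into: "\<omega> ` unit_disc \<subseteq> unit_disc"
    using \<omega>_disc by auto
  have H\<omega>: "(\<lambda>z. cheb_H t (\<omega> z)) holomorphic_on unit_disc"
    using holomorphic_on_compose_gen[OF \<omega> holomorphic_cheb_H[OF t] \<omega>_into] by (simp add: o_def)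
  have "(deriv ^^ n) (B_operator lam \<mu> \<delta> h L) 0 = (deriv ^^ n) (\<lambda>z. cheb_H t (\<omega> z)) 0" for n
  proof -
    have "B_operator lam \<mu> \<delta> h L holomorphic_on unit_disc"
      using holomorphic_transform[OF H\<omega>] F_eq by blast
    with H\<omega> F_eq show ?thesis
      by (intro higher_deriv_transform_within_open) auto
  qed
  note F_derivs = this[of 1] this[of 2]
  note chain = deriv_compose_open higher_deriv2_compose
  note chain = chain[OF holomorphic_cheb_H[OF t] \<omega> open_ball open_ball \<omega>_into, of 0]
  have z0: "(0::complex) \<in> unit_disc" by simp
  note B_derivs = B_operator_derivs_at_0[OF h_hol L open_ball z0 \<open>L 0 = 0\<close> h_eq,
      where lam=lam and \<mu>=\<mu> and \<delta>=\<delta>, folded \<kappa>_def]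
  note h_derivs = higher_derivs_ident_mult_exp_at_0[OF h_hol L open_ball z0 \<open>L 0 = 0\<close> h_eq]
  have \<omega>_bounds: "norm (deriv \<omega> 0) \<le> 1" "norm ((deriv ^^ 2) \<omega> 0 / 2) \<le> 1"
    using norm_higher_deriv_le_fact_unit_disc[OF \<omega>, of 1] norm_higher_deriv_le_fact_unit_disc[OF \<omega>, of 2]
      \<omega>_disc by (auto simp: less_imp_le norm_divide)
  have e1: "of_real (lam + \<mu> + 2*\<kappa>) * deriv L 0 = 2 * of_real t * deriv \<omega> 0"
    using F_derivs(1) B_derivs(1) chain(1) cheb_H_derivs_at_0[OF t] \<open>\<omega> 0 = 0\<close>
    by simp
  have e2: "of_real (2*lam + \<mu> + 6*\<kappa>) * (deriv ^^ 2) L 0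
      + of_real (\<mu>^2 + 2*lam*\<mu> + 6*\<kappa>) * deriv L 0 ^ 2
      = (8 * of_real t ^ 2 - 2) * deriv \<omega> 0 ^ 2 + 2 * of_real t * (deriv ^^ 2) \<omega> 0"
    using F_derivs(2) B_derivs(2) chain(2) cheb_H_derivs_at_0[OF t] \<open>\<omega> 0 = 0\<close>
    by simp
  show ?thesis
  proof (intro exI conjI)
    show "of_real (lam + \<mu> + 2*\<kappa>) * taylor_coeff h 2 = 2 * of_real t * deriv \<omega> 0"
      using e1 h_derivs(1) by (simp add: taylor_coeff_2)
    show "of_real (2*lam + \<mu> + 6*\<kappa>) * taylor_coeff h 3
      + of_real ((2*lam + \<mu>) * (\<mu> - 1) / 2) * taylor_coeff h 2 ^ 2
      = 2 * of_real t * ((deriv ^^ 2) \<omega> 0 / 2) + (4 * of_real t ^ 2 - 1) * deriv \<omega> 0 ^ 2"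
      using arg_cong[OF e2, of "\<lambda>x. 6 * x"] h_derivs
      by (simp add: taylor_coeff_2 taylor_coeff_3 field_simps power2_eq_square)
  qed (use \<omega>_bounds in auto)
qed

lemma bi_univalent_inverse_taylor_coeffs:
  assumes "bi_univalent f" and "is_bi_inverse f g"
  shows "normalized_analytic g" "taylor_coeff g 2 = - taylor_coeff f 2"
    "taylor_coeff g 3 = 2 * taylor_coeff f 2 ^ 2 - taylor_coeff f 3"
proof -
  obtain r where f: "f holomorphic_on unit_disc" "f 0 = 0" "deriv f 0 = 1" "inj_on f unit_disc"
    and g: "g holomorphic_on unit_disc" and "r > 0"
    and inverse: "\<And>w. w \<in> ball 0 r \<Longrightarrow> g w \<in> unit_disc \<and> f (g w) = w"
    using assms unfolding bi_univalent_def is_bi_inverse_def normalized_analytic_def by blast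
  define S where "S = ball (0::complex) (min r 1)"
  have S: "open S" "0 \<in> S" "S \<subseteq> unit_disc" "g ` S \<subseteq> unit_disc"
    and inverse_S: "\<And>w. w \<in> S \<Longrightarrow> f (g w) = w"
    using \<open>r > 0\<close> inverse by (auto simp: S_def)
  have "g 0 = 0"
    using inj_onD[OF f(4), of "g 0" 0] inverse[of 0] f(2) \<open>r > 0\<close> by simp
  note inv = higher_derivs_inverse_at_0[OF f(1) holomorphic_on_subset[OF g S(3)] S(1) open_ball
      S(4,2) inverse_S \<open>g 0 = 0\<close> f(3)]
  show "normalized_analytic g"
    using g \<open>g 0 = 0\<close> inv(1) by (simp add: normalized_analytic_def)
  show "taylor_coeff g 2 = - taylor_coeff f 2"
    "taylor_coeff g 3 = 2 * taylor_coeff f 2 ^ 2 - taylor_coeff f 3"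
    using inv(2,3) by (simp_all add: taylor_coeff_2 taylor_coeff_3 field_simps power2_eq_square)
qed

lemma le_divide_sqrt_if_square_mult_le:
  fixes x e c :: real
  assumes "0 \<le> x" "0 \<le> c" "0 < e" "x^2 * e \<le> c^2"
  shows "x \<le> c / sqrt e"
proof -
  have "x * sqrt e = sqrt (x^2 * e)"
    using assms(1,3) by (simp add: real_sqrt_mult)
  also have "\<dots> \<le> c"
    using real_sqrt_le_mono[OF assms(4)] assms(2) by simp
  finally show ?thesis
    using assms(3) by (simp add: le_divide_eq)
qed

lemma coefficient_bounds_from_relations:
  fixes a2 a3 c1 c2 d1 d2 :: complex and A B C t :: real
  assumes "A > 0" "B > 0" "t > 0" "norm c1 \<le> 1" "norm c2 \<le> 1" "norm d2 \<le> 1"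
    and f1: "of_real A * a2 = 2 * of_real t * c1"
    and g1: "of_real A * (- a2) = 2 * of_real t * d1"
    and f2: "of_real B * a3 + of_real C * a2^2 = 2 * of_real t * c2 + (4 * of_real t ^ 2 - 1) * c1^2"
    and g2: "of_real B * (2 * a2^2 - a3) + of_real C * (- a2)^2
      = 2 * of_real t * d2 + (4 * of_real t ^ 2 - 1) * d1^2"
  shows "norm a2 ^ 2 * \<bar>A^2 + 4 * t^2 * (B + C - A^2)\<bar> \<le> 8 * t^3"
    and "norm a3 \<le> 4 * t^2 / A^2 + 2 * t / B"
proof -
  have "2 * of_real t * (d1 + c1) = 0"
    using f1 g1 by algebra
  then have "d1 = - c1"
    using \<open>t > 0\<close> by (simp add: add_eq_0_iff2)
  moreover have "4 * of_real t ^ 2 * c1^2 = of_real A ^ 2 * a2^2"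
    using arg_cong[OF f1, of "\<lambda>x. x^2"] by (simp add: power_mult_distrib)
  ultimately have sum: "a2^2 * of_real (A^2 + 4 * t^2 * (B + C - A^2)) = 4 * of_real t ^ 3 * (c2 + d2)"
    unfolding of_real_add of_real_mult of_real_diff of_real_power of_real_numeral
    using f2 g2 by algebra
  have diff: "of_real B * (a3 - a2^2) = of_real t * (c2 - d2)"
    using f2 g2 \<open>d1 = - c1\<close> by algebra
  have cd: "norm (c2 + d2) \<le> 2" "norm (c2 - d2) \<le> 2"
    using norm_triangle_ineq[of c2 d2] norm_triangle_ineq4[of c2 d2] assms(5,6) by linarith+
  have "norm a2 ^ 2 * \<bar>A^2 + 4 * t^2 * (B + C - A^2)\<bar> = 4 * t^3 * norm (c2 + d2)"
    using arg_cong[OF sum, of norm, unfolded norm_mult norm_power norm_of_real] \<open>t > 0\<close> by simp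
  also have "\<dots> \<le> 8 * t^3"
    using cd(1) \<open>t > 0\<close> by simp
  finally show "norm a2 ^ 2 * \<bar>A^2 + 4 * t^2 * (B + C - A^2)\<bar> \<le> 8 * t^3" .
  have "A * norm a2 = 2 * t * norm c1"
    using arg_cong[OF f1, of norm] \<open>A > 0\<close> \<open>t > 0\<close> by (simp add: norm_mult)
  then have "A * norm a2 \<le> 2 * t"
    using \<open>norm c1 \<le> 1\<close> \<open>t > 0\<close> by (simp add: mult_left_le)
  then have "norm a2 ^ 2 \<le> (2 * t / A)^2"
    using \<open>A > 0\<close> by (intro power_mono) (simp_all add: field_simps)
  moreover have "a3 = a2^2 + of_real t * (c2 - d2) / of_real B"
    using diff \<open>B > 0\<close> by (simp add: field_simps)
  then have "norm a3 \<le> norm a2 ^ 2 + t * norm (c2 - d2) / B"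
    using norm_triangle_ineq[of "a2^2" "of_real t * (c2 - d2) / of_real B"] \<open>t > 0\<close> \<open>B > 0\<close>
    by (simp add: norm_mult norm_divide norm_power)
  moreover have "t * norm (c2 - d2) / B \<le> 2 * t / B"
    using cd(2) \<open>t > 0\<close> \<open>B > 0\<close> by (simp add: divide_right_mono)
  ultimately show "norm a3 \<le> 4 * t^2 / A^2 + 2 * t / B"
    by (simp add: power_divide)
qed

lemma B_class_taylor_coeff_bounds:
  fixes lam \<mu> \<delta> t :: real and f :: "complex \<Rightarrow> complex"
  assumes "f \<in> B_class \<mu> lam \<delta> t" and t: "0 < t" "t \<le> 1"
  defines "\<kappa> \<equiv> (2*lam + \<mu>) / (2*lam + 1) * \<delta>"
  assumes "lam + \<mu> + 2*\<kappa> > 0" and "2*lam + \<mu> + 6*\<kappa> > 0"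
  shows "norm (taylor_coeff f 2) ^ 2 * \<bar>(lam + \<mu> + 2*\<kappa>)^2
      + 4 * t^2 * ((2*lam + \<mu> + 6*\<kappa>) + (2*lam + \<mu>) * (\<mu> - 1) / 2 - (lam + \<mu> + 2*\<kappa>)^2)\<bar>
      \<le> 8 * t^3"
    and "norm (taylor_coeff f 3) \<le> 4 * t^2 / (lam + \<mu> + 2*\<kappa>)^2 + 2 * t / (2*lam + \<mu> + 6*\<kappa>)"
proof -
  have f: "bi_univalent f" "B_condition lam \<mu> \<delta> t f"
    and g_cond: "\<And>g. is_bi_inverse f g \<Longrightarrow> B_condition lam \<mu> \<delta> t g"
    using assms(1) unfolding B_class_def by auto
  obtain g where g: "is_bi_inverse f g"
    using f(1) unfolding bi_univalent_def is_bi_inverse_def by blast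
  have "\<bar>t\<bar> \<le> 1" "normalized_analytic f"
    using t f(1) by (auto simp: bi_univalent_def)
  from B_condition_coeff_relations[OF this(2) f(2) this(1), folded \<kappa>_def]
  obtain c1 c2 where c: "norm c1 \<le> 1" "norm c2 \<le> 1" and rel_f:
    "of_real (lam + \<mu> + 2*\<kappa>) * taylor_coeff f 2 = 2 * of_real t * c1"
    "of_real (2*lam + \<mu> + 6*\<kappa>) * taylor_coeff f 3
     + of_real ((2*lam + \<mu>) * (\<mu> - 1) / 2) * taylor_coeff f 2 ^ 2
     = 2 * of_real t * c2 + (4 * of_real t ^ 2 - 1) * c1 ^ 2"
    by (elim exE conjE) (rule that; assumption)
  note g_coeffs = bi_univalent_inverse_taylor_coeffs[OF f(1) g]
  from B_condition_coeff_relations[OF g_coeffs(1) g_cond[OF g] \<open>\<bar>t\<bar> \<le> 1\<close>, folded \<kappa>_def,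
      unfolded g_coeffs(2,3)]
  obtain d1 d2 where d: "norm d2 \<le> 1" and rel_g:
    "of_real (lam + \<mu> + 2*\<kappa>) * (- taylor_coeff f 2) = 2 * of_real t * d1"
    "of_real (2*lam + \<mu> + 6*\<kappa>) * (2 * taylor_coeff f 2 ^ 2 - taylor_coeff f 3)
     + of_real ((2*lam + \<mu>) * (\<mu> - 1) / 2) * (- taylor_coeff f 2) ^ 2
     = 2 * of_real t * d2 + (4 * of_real t ^ 2 - 1) * d1 ^ 2"
    by (elim exE conjE) (rule that; assumption)
  show "norm (taylor_coeff f 2) ^ 2 * \<bar>(lam + \<mu> + 2*\<kappa>)^2
      + 4 * t^2 * ((2*lam + \<mu> + 6*\<kappa>) + (2*lam + \<mu>) * (\<mu> - 1) / 2 - (lam + \<mu> + 2*\<kappa>)^2)\<bar>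
      \<le> 8 * t^3"
    and "norm (taylor_coeff f 3) \<le> 4 * t^2 / (lam + \<mu> + 2*\<kappa>)^2 + 2 * t / (2*lam + \<mu> + 6*\<kappa>)"
    using coefficient_bounds_from_relations[OF assms(5,6) t(1) c d rel_f(1) rel_g(1) rel_f(2) rel_g(2)] .
qed

theorem theorem1:
  fixes lam \<mu> \<delta> t :: real and f :: "complex \<Rightarrow> complex"
  assumes "lam \<ge> 1" and "\<mu> \<ge> 0" and "\<delta> \<ge> 0" and "1/2 < t" and "t < 1"
    and "f \<in> B_class \<mu> lam \<delta> t"
  defines "\<xi> \<equiv> (2*lam + \<mu>) / (2*lam + 1)"
  shows "(\<bar>(lam + \<mu> + 2*\<xi>*\<delta>)^2
             - 2 * (2*(lam + \<mu> + 2*\<xi>*\<delta>)^2 - (2*lam + \<mu>)*(\<mu> + 1) - 12*\<xi>*\<delta>) * t^2\<bar> \<noteq> 0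
          \<longrightarrow> norm (taylor_coeff f 2) \<le> 2 * t * sqrt (2 * t) /
              sqrt \<bar>(lam + \<mu> + 2*\<xi>*\<delta>)^2
                - 2 * (2*(lam + \<mu> + 2*\<xi>*\<delta>)^2 - (2*lam + \<mu>)*(\<mu> + 1) - 12*\<xi>*\<delta>) * t^2\<bar>)
         \<and> norm (taylor_coeff f 3) \<le> 4*t^2 / (lam + \<mu> + 2*\<xi>*\<delta>)^2 + 2*t / (2*lam + \<mu> + 6*\<xi>*\<delta>)"
proof -
  have t: "0 < t" "t \<le> 1" and \<xi>\<delta>: "\<xi> * \<delta> \<ge> 0"
    using assms(1-5) by (auto simp: \<xi>_def)
  have "lam + \<mu> + 2*(\<xi>*\<delta>) > 0" "2*lam + \<mu> + 6*(\<xi>*\<delta>) > 0"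
    using assms(1,2) \<xi>\<delta> by auto
  note bounds = B_class_taylor_coeff_bounds[OF assms(6) t, folded \<xi>_def, OF this]
  have E: "(lam + \<mu> + 2*\<xi>*\<delta>)^2 - 2 * (2*(lam + \<mu> + 2*\<xi>*\<delta>)^2 - (2*lam + \<mu>)*(\<mu> + 1) - 12*\<xi>*\<delta>) * t^2
      = (lam + \<mu> + 2*(\<xi>*\<delta>))^2 + 4 * t^2 * ((2*lam + \<mu> + 6*(\<xi>*\<delta>)) + (2*lam + \<mu>) * (\<mu> - 1) / 2
          - (lam + \<mu> + 2*(\<xi>*\<delta>))^2)"
    by (simp add: field_simps power2_eq_square)
  have "(2 * t * sqrt (2 * t))^2 = 8 * t^3"
    using t(1) by (simp add: power_mult_distrib power3_eq_cube power2_eq_square)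
  then show ?thesis
    using bounds t(1) unfolding E
    by (auto simp: mult.assoc intro!: le_divide_sqrt_if_square_mult_le)
qed

end
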